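(* For every $m\in\mathbb N$, \[ \frac{e^m}{m^{1/4}e^2}\le\Big(\sum_{j=0}^m\Big(\frac{m^j}{j!}\Big)^2\Big)^{1/2}\le\frac{e^m}{m^{1/4}}. \] *)

theory Defs
  imports Complex_Main
begin

end

theory Submission
  imports Defs
begin

text \<open>
  Write \<open>a\<^sub>j = m\<^sup>j / j!\<close>; for \<open>j \<le> m\<close> these terms increase, so \<open>a\<^sub>m\<close> is the largest.
  Both bounds reduce to Stirling-type estimates
  \<open>m\<^sup>2\<^sup>m (m+1) \<le> (m! e\<^sup>m)\<^sup>2 \<le> e\<^sup>2 m\<^sup>2\<^sup>m\<^sup>+\<^sup>1\<close>, proved by induction on \<open>m\<close>: the ratio of
  consecutive cases is controlled by \<open>2x/(2+x) \<le> ln (1+x) \<le> x - x\<^sup>2/2 + x\<^sup>3/3\<close>.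
  Upper bound: \<open>\<Sum> a\<^sub>j\<^sup>2 \<le> a\<^sub>m \<Sum> a\<^sub>j \<le> a\<^sub>m e\<^sup>m\<close>.
  Lower bound: with \<open>2k\<^sup>2 \<le> m < 2(k+1)\<^sup>2\<close>, Bernoulli's inequality shows that each of the
  \<open>k+1\<close> terms with \<open>m - k \<le> j \<le> m\<close> is at least \<open>a\<^sub>m/2\<close>, so the sum is at least
  \<open>(k+1) a\<^sub>m\<^sup>2/4\<close>, which is of order \<open>\<surd>m a\<^sub>m\<^sup>2\<close>.
\<close>

lemma ln_add_one_ge_pade:
  fixes x :: real
  assumes "0 \<le> x"
  shows "2 * x / (2 + x) \<le> ln (1 + x)"
proof -
  let ?h = "\<lambda>x::real. ln (1 + x) - 2 * x / (2 + x)"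
  have "?h 0 \<le> ?h x"
  proof (rule DERIV_nonneg_imp_nondecreasing[OF assms])
    fix y :: real
    assume y: "0 \<le> y"
    have "(?h has_real_derivative (1 / (1 + y) - 4 / (2 + y)^2)) (at y)"
      using y by (auto intro!: derivative_eq_intros simp: power2_eq_square field_simps)
    moreover have "4 / (2 + y)^2 \<le> 1 / (1 + y)"
      using y by (simp add: divide_simps power2_eq_square) (simp add: algebra_simps)
    ultimately show "\<exists>d. (?h has_real_derivative d) (at y) \<and> 0 \<le> d"
      by auto
  qed
  then show ?thesis by simp
qed

lemma ln_add_one_le_cubic:
  fixes x :: real
  assumes "0 \<le> x"
  shows "ln (1 + x) \<le> x - x^2 / 2 + x^3 / 3"
proof -
  let ?h = "\<lambda>x::real. x - x^2 / 2 + x^3 / 3 - ln (1 + x)"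
  have "?h 0 \<le> ?h x"
  proof (rule DERIV_nonneg_imp_nondecreasing[OF assms])
    fix y :: real
    assume y: "0 \<le> y"
    have "(?h has_real_derivative y^3 / (1 + y)) (at y)"
      using y by (auto intro!: derivative_eq_intros
                       simp: field_simps power2_eq_square power3_eq_cube)
    then show "\<exists>d. (?h has_real_derivative d) (at y) \<and> 0 \<le> d"
      using y by auto
  qed
  then show ?thesis by simp
qed

lemma exp2_ge_6: "6 \<le> exp (2::real)"
proof -
  have "5/2 \<le> exp (1::real)"
    using exp_lower_Taylor_quadratic[of 1] by simp
  then have "(5/2)^2 \<le> exp (1::real) ^ 2"
    by (rule power_mono) simp
  then show ?thesis
    by (simp add: power2_eq_square flip: exp_add)
qed

lemma exp2_mult_power_le_power_Suc:
  "exp 2 * real m ^ (2*m+1) \<le> real (m+1) ^ (2*m+1)"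
proof (cases "m = 0")
  case False
  then have m: "real m > 0" by simp
  have "2 \<le> real (2*m+1) * ln (1 + 1 / real m)"
    using ln_add_one_ge_pade[of "1 / real m"] m by (simp add: field_simps)
  then have "exp 2 \<le> exp (real (2*m+1) * ln (1 + 1 / real m))"
    by (simp only: exp_le_cancel_iff)
  also have "\<dots> = (real (m+1) / real m) ^ (2*m+1)"
    using m by (simp only: exp_of_nat_mult) (simp add: field_simps)
  finally show ?thesis
    using m by (simp add: field_simps del: of_nat_Suc)
qed simp

lemma power_Suc_mult_le_exp2_mult_power:
  "real (m+1) ^ (2*m) * real (m+2) \<le> exp 2 * real m ^ (2*m) * real (m+1)"
proof (cases "m \<le> 1")
  case True
  then show ?thesis
    using exp2_ge_6 by (auto simp: le_Suc_eq)
next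
  case False
  then have m: "real m \<ge> 2" by simp
  have cubic: "2 * real m * (1 / real m - (1 / real m)^2 / 2 + (1 / real m)^3 / 3)
              = 2 - 1 / real m + 2 / (3 * real m ^ 2)"
    using m by (simp add: field_simps power2_eq_square power3_eq_cube)
  have key: "2 / (3 * real m ^ 2) + 1 / real (m+1) \<le> 1 / real m"
    using m by (simp add: divide_simps power2_eq_square) (simp add: algebra_simps)
  have "2 * real m * ln (1 + 1 / real m)
        \<le> 2 * real m * (1 / real m - (1 / real m)^2 / 2 + (1 / real m)^3 / 3)"
    using ln_add_one_le_cubic[of "1 / real m"] m by (intro mult_left_mono) auto
  moreover have "ln (1 + 1 / real (m+1)) \<le> 1 / real (m+1)"
    by (rule ln_add_one_self_le_self) simp
  ultimately have "real (2*m) * ln (1 + 1 / real m) + ln (1 + 1 / real (m+1)) \<le> 2"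
    using key unfolding cubic by simp
  then have "exp (real (2*m) * ln (1 + 1 / real m) + ln (1 + 1 / real (m+1))) \<le> exp 2"
    by (simp only: exp_le_cancel_iff)
  then have "exp (ln (1 + 1 / real m)) ^ (2*m) * exp (ln (1 + 1 / real (m+1))) \<le> exp 2"
    by (simp only: exp_add exp_of_nat_mult)
  then have "(real (m+1) / real m) ^ (2*m) * (real (m+2) / real (m+1)) \<le> exp 2"
    using m by (simp add: field_simps)
  then show ?thesis
    using m by (simp add: field_simps del: of_nat_Suc)
qed

lemma fact_exp_squared_Suc:
  "(fact (Suc n) * exp (real (Suc n)))^2 = real (n+1)^2 * exp 2 * (fact n * exp (real n))^2"
proof -
  have "exp (real (Suc n)) ^ 2 = exp 2 * exp (real n) ^ 2"
    by (simp flip: exp_of_nat_mult exp_add add: algebra_simps)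
  then show ?thesis
    by (simp only: power_mult_distrib fact_Suc) (simp add: algebra_simps)
qed

lemma power_mult_Suc_le_fact_exp_squared:
  "real m ^ (2*m) * real (m+1) \<le> (fact m * exp (real m))^2"
proof (induction m)
  case (Suc n)
  have "real (Suc n) ^ (2 * Suc n) * real (Suc n + 1)
      = real (n+1)^2 * (real (n+1) ^ (2*n) * real (n+2))"
    by (simp add: power_add power2_eq_square algebra_simps del: of_nat_Suc)
  also have "\<dots> \<le> real (n+1)^2 * (exp 2 * (real n ^ (2*n) * real (n+1)))"
    using power_Suc_mult_le_exp2_mult_power[of n] by (simp add: mult.assoc)
  also have "\<dots> \<le> real (n+1)^2 * exp 2 * (fact n * exp (real n))^2"
    using Suc.IH by (simp add: mult.assoc)
  also have "\<dots> = (fact (Suc n) * exp (real (Suc n)))^2"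
    by (rule fact_exp_squared_Suc[symmetric])
  finally show ?case .
qed simp

lemma fact_exp_squared_le_exp2_mult_power:
  assumes "m \<ge> 1"
  shows "(fact m * exp (real m))^2 \<le> exp 2 * real m ^ (2*m+1)"
  using assms
proof (induction m rule: dec_induct)
  case base
  then show ?case by (simp add: power2_eq_square flip: exp_add)
next
  case (step n)
  have "(fact (Suc n) * exp (real (Suc n)))^2 = real (n+1)^2 * exp 2 * (fact n * exp (real n))^2"
    by (rule fact_exp_squared_Suc)
  also have "\<dots> \<le> real (n+1)^2 * exp 2 * (exp 2 * real n ^ (2*n+1))"
    using step.IH by (intro mult_left_mono) auto
  also have "\<dots> \<le> real (n+1)^2 * exp 2 * real (n+1) ^ (2*n+1)"
    using exp2_mult_power_le_power_Suc[of n] by (intro mult_left_mono) auto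
  also have "\<dots> = exp 2 * real (Suc n) ^ (2 * Suc n + 1)"
    by (simp add: power_add power2_eq_square algebra_simps del: of_nat_Suc)
  finally show ?case .
qed

lemma sum_power_div_fact_le_exp:
  fixes x :: real
  assumes "0 \<le> x"
  shows "(\<Sum>j=0..n. x^j / fact j) \<le> exp x"
proof -
  have sums: "(\<lambda>j. x^j / fact j) sums exp x"
    using exp_converges[of x] by (simp add: field_simps)
  then have "(\<Sum>j\<in>{0..n}. x^j / fact j) \<le> (\<Sum>j. x^j / fact j)"
    using assms by (intro sum_le_suminf) (auto simp: sums_iff)
  with sums show ?thesis
    by (simp add: sums_iff)
qed

lemma power_div_fact_le_self_power_div_fact:
  assumes "j \<le> m"
  shows "real m ^ j / fact j \<le> real m ^ m / fact m"
  using assms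
proof (induction j rule: inc_induct)
  case (step i)
  have "real m ^ i / fact i \<le> real m ^ i / fact i * (real m / real (Suc i))"
    using step.hyps by (intro mult_le_cancel_left1[THEN iffD2]) (simp add: field_simps)
  also have "\<dots> = real m ^ Suc i / fact (Suc i)"
    by (simp add: field_simps)
  finally show ?case
    using step.IH by linarith
qed simp

lemma fact_mult_power_le_fact_add:
  "fact j * real (j+1) ^ i \<le> (fact (j+i) :: real)"
proof (induction i)
  case (Suc i)
  have "fact j * real (j+1) ^ Suc i = fact j * real (j+1) ^ i * real (j+1)"
    by simp
  also have "\<dots> \<le> fact (j+i) * real (j+i+1)"
    using Suc.IH by (intro mult_mono) auto
  also have "\<dots> = fact (j + Suc i)"
    by (simp add: algebra_simps)
  finally show ?case .
qed simp

lemma ex_twice_square_le_less: "\<exists>k::nat. 2*k^2 \<le> m \<and> m < 2*(k+1)^2"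
proof (induction m)
  case (Suc m)
  then obtain k where k: "2*k^2 \<le> m" "m < 2*(k+1)^2"
    by blast
  show ?case
  proof (cases "Suc m < 2*(k+1)^2")
    case False
    with k have "Suc m = 2*(k+1)^2"
      by simp
    then show ?thesis
      by (intro exI[of _ "k+1"]) (simp add: power2_eq_square)
  qed (use k in \<open>auto intro: exI[of _ k]\<close>)
qed simp

lemma self_power_div_fact_half_le_power_div_fact:
  assumes "2*k^2 \<le> m" and "m - k \<le> j" and "j \<le> m"
  shows "real m ^ m / fact m / 2 \<le> real m ^ j / fact j"
proof (cases "m = 0")
  case False
  then have m: "real m > 0" by simp
  define i where "i = m - j"
  have ij: "j + i = m" "i \<le> k"
    using assms unfolding i_def by auto
  have "real m ^ m / fact m * (real (j+1) / real m)^i = real m ^ j * real (j+1)^i / fact m"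
    using m ij(1)[symmetric] by (simp add: power_add field_simps)
  also have "\<dots> \<le> real m ^ j * real (j+1)^i / (fact j * real (j+1)^i)"
    using fact_mult_power_le_fact_add[of j i] ij(1) by (intro divide_left_mono mult_pos_pos) auto
  also have "\<dots> = real m ^ j / fact j"
    by simp
  finally have shrink: "real m ^ m / fact m * (real (j+1) / real m)^i \<le> real m ^ j / fact j" .
  have "real i * real i \<le> real k * real k"
    using ij(2) by (simp add: mult_mono)
  also have "\<dots> \<le> real m / 2"
    using assms(1) by (simp add: power2_eq_square flip: of_nat_mult)
  finally have "1/2 \<le> 1 + real i * (- real i / real m)"
    using m by (simp add: field_simps)
  also have "\<dots> \<le> (1 - real i / real m)^i"
    using Bernoulli_inequality[of "- real i / real m" i] ij m by (simp add: field_simps)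
  also have "\<dots> \<le> (real (j+1) / real m)^i"
    using ij m by (intro power_mono) (auto simp: field_simps)
  finally have "real m ^ m / fact m * (1/2) \<le> real m ^ m / fact m * (real (j+1) / real m)^i"
    by (intro mult_left_mono) auto
  with shrink show ?thesis
    by simp
qed (use assms in simp)

lemma sum_squares_power_div_fact_le:
  "(\<Sum>j=0..m. (real m ^ j / fact j)^2) * sqrt (real m) \<le> exp (real m)^2"
proof -
  define a where "a j = real m ^ j / fact j" for j
  have "(a m * sqrt (real m))^2 = real m ^ (2*m) * real m / (fact m)^2"
    by (simp add: a_def power_mult_distrib power_divide power_mult mult.commute)
  also have "\<dots> \<le> real m ^ (2*m) * real (m+1) / (fact m)^2"
    by (intro divide_right_mono mult_left_mono) auto
  also have "\<dots> \<le> exp (real m)^2"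
    using power_mult_Suc_le_fact_exp_squared[of m]
    by (simp add: divide_le_eq power_mult_distrib mult.commute)
  finally have am: "a m * sqrt (real m) \<le> exp (real m)"
    by (rule power2_le_imp_le) simp
  have "(\<Sum>j=0..m. (a j)^2) \<le> (\<Sum>j=0..m. a m * a j)"
    unfolding power2_eq_square
    by (intro sum_mono mult_right_mono) (auto simp: a_def intro: power_div_fact_le_self_power_div_fact)
  also have "\<dots> = a m * (\<Sum>j=0..m. a j)"
    by (simp add: sum_distrib_left)
  also have "\<dots> \<le> a m * exp (real m)"
    unfolding a_def by (intro mult_left_mono sum_power_div_fact_le_exp) auto
  finally have "(\<Sum>j=0..m. (a j)^2) * sqrt (real m) \<le> a m * exp (real m) * sqrt (real m)"
    by (rule mult_right_mono) simp
  also have "\<dots> = (a m * sqrt (real m)) * exp (real m)"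
    by (simp add: mult_ac)
  also have "\<dots> \<le> exp (real m)^2"
    using am by (simp add: power2_eq_square mult_right_mono)
  finally show ?thesis
    by (simp add: a_def)
qed

lemma exp_squared_le_sum_squares_power_div_fact:
  assumes "m \<ge> 1"
  shows "exp (real m)^2 \<le> (exp 2)^2 * sqrt (real m) * (\<Sum>j=0..m. (real m ^ j / fact j)^2)"
proof -
  define a where "a j = real m ^ j / fact j" for j
  obtain k where k: "2*k^2 \<le> m" "m < 2*(k+1)^2"
    using ex_twice_square_le_less by blast
  have "k \<le> m"
    using k(1) by (metis le_square power2_eq_square le_trans mult_2 le_add1)
  then have "real (k+1) * (a m / 2)^2 = (\<Sum>j=m-k..m. (a m / 2)^2)"
    by simp
  also have "\<dots> \<le> (\<Sum>j=m-k..m. (a j)^2)"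
    using self_power_div_fact_half_le_power_div_fact[OF k(1)]
    by (intro sum_mono power_mono) (auto simp: a_def)
  also have "\<dots> \<le> (\<Sum>j=0..m. (a j)^2)"
    by (intro sum_mono2) auto
  finally have sum_ge: "real (k+1) * (a m / 2)^2 \<le> (\<Sum>j=0..m. (a j)^2)" .
  have "real m < real (2*(k+1)^2)"
    using k(2) by (simp only: of_nat_less_iff)
  then have "(4 * sqrt (real m))^2 \<le> 36 * real (k+1)^2"
    by (simp add: power_mult_distrib)
  also have "\<dots> \<le> (real (k+1) * exp 2)^2"
    using mult_right_mono[OF power_mono[OF exp2_ge_6, of 2], of "real (k+1)^2"]
    by (simp add: power_mult_distrib mult.commute)
  finally have k_ge: "4 * sqrt (real m) \<le> real (k+1) * exp 2"
    by (rule power2_le_imp_le) simp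
  have "exp (real m)^2 \<le> exp 2 * real m * (a m)^2"
    using fact_exp_squared_le_exp2_mult_power[OF assms]
    by (simp add: a_def power_mult field_simps)
  also have "\<dots> = exp 2 * sqrt (real m) * (a m / 2)^2 * (4 * sqrt (real m))"
    by (simp add: power2_eq_square)
  also have "\<dots> \<le> exp 2 * sqrt (real m) * (a m / 2)^2 * (real (k+1) * exp 2)"
    using k_ge by (intro mult_left_mono) auto
  also have "\<dots> = (exp 2)^2 * sqrt (real m) * (real (k+1) * (a m / 2)^2)"
    by (simp add: power2_eq_square)
  also have "\<dots> \<le> (exp 2)^2 * sqrt (real m) * (\<Sum>j=0..m. (a j)^2)"
    using sum_ge by (intro mult_left_mono) auto
  finally show ?thesis
    by (simp add: a_def)
qed

theorem lemmaA2:
  fixes m :: nat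
  assumes "m \<ge> 1"
  shows "exp (real m) / (real m powr (1/4) * exp 2)
           \<le> sqrt (\<Sum>j=0..m. (real m ^ j / fact j)^2) \<and>
         sqrt (\<Sum>j=0..m. (real m ^ j / fact j)^2) \<le> exp (real m) / real m powr (1/4)"
proof -
  define S where "S = (\<Sum>j=0..m. (real m ^ j / fact j)^2)"
  define q where "q = real m powr (1/4)"
  have q_pos: "q > 0"
    using assms by (simp add: q_def)
  have "q = sqrt (sqrt (real m))"
    by (simp add: q_def powr_half_sqrt[symmetric] powr_powr)
  then have q_squared: "q^2 = sqrt (real m)"
    by simp
  have "(exp (real m) / (q * exp 2))^2 = exp (real m)^2 / ((exp 2)^2 * sqrt (real m))"
    by (simp add: power_divide power_mult_distrib q_squared mult_ac)
  also have "\<dots> \<le> S"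
    using exp_squared_le_sum_squares_power_div_fact[OF assms] assms
    by (simp add: S_def pos_divide_le_eq mult_ac)
  finally have "(exp (real m) / (q * exp 2))^2 \<le> S" .
  moreover have "S \<le> (exp (real m) / q)^2"
    using sum_squares_power_div_fact_le[of m] assms
    by (simp add: S_def q_squared power_divide le_divide_eq)
  ultimately show ?thesis
    unfolding S_def[symmetric] q_def[symmetric] using q_pos
    by (auto intro: real_le_rsqrt real_le_lsqrt)
qed

end
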